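(* For every $n\ge 3$ there does not exist any $\mathrm{SL}_2$-tiling of $\mathbb{Z}^n$.
   Context: Write $\mathbf{e}_k$ for the $k$-th standard unit vector of $\mathbb{Z}^n$. An $\mathrm{SL}_2$-tiling of $\mathbb{Z}^n$ is an array $(a_{\mathbf{i}})_{\mathbf{i}\in\mathbb{Z}^n}$ with all $a_{\mathbf{i}}\in\mathbb{Z}_{>0}$ such that for all $\mathbf{i}\in\mathbb{Z}^n$ and all $k\ne\ell$: $a_{\mathbf{i}+\mathbf{e}_\ell}a_{\mathbf{i}+\mathbf{e}_k}-a_{\mathbf{i}}a_{\mathbf{i}+\mathbf{e}_k+\mathbf{e}_\ell}=1$. *)

theory Defs
  imports Main
begin

text \<open>Points of Z^n are modelled as functions nat => int vanishing outside {0..<n}.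
  The standard unit vectors e_k are indexed by k < n (0-based).\<close>

definition lattice :: "nat \<Rightarrow> (nat \<Rightarrow> int) set" where
  "lattice n = {i. \<forall>k\<ge>n. i k = 0}"

definition unitvec :: "nat \<Rightarrow> nat \<Rightarrow> int" where
  "unitvec k = (\<lambda>j. if j = k then 1 else 0)"

definition vadd :: "(nat \<Rightarrow> int) \<Rightarrow> (nat \<Rightarrow> int) \<Rightarrow> nat \<Rightarrow> int" where
  "vadd i j = (\<lambda>m. i m + j m)"

definition SL2_tiling :: "nat \<Rightarrow> ((nat \<Rightarrow> int) \<Rightarrow> int) \<Rightarrow> bool" where
  "SL2_tiling n a \<longleftrightarrow>
     (\<forall>i\<in>lattice n. a i > 0) \<and>
     (\<forall>i\<in>lattice n. \<forall>k<n. \<forall>l<n. k \<noteq> l \<longrightarrow>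
        a (vadd i (unitvec l)) * a (vadd i (unitvec k)) - a i * a (vadd (vadd i (unitvec k)) (unitvec l)) = 1)"

end

theory Submission
  imports Defs
begin

text \<open>Fix three distinct directions and look at the unit cube they span at a point of the
  tiling. Eliminating the far corner and the face centres from five of the cube's relations
  gives (b1 - b2)(b1 b2 - 1 + a^2) = 0 for two neighbours b1, b2 of the corner value a, so
  positivity forces all neighbours of a point to carry the same value. Along a coordinate axis
  the tiling then restricts to a bi-infinite sequence of positive integers with
  h(t+1)^2 - h(t) h(t+2) = 1. Such a sequence is strictly log-concave, hence eventually
  strictly decreasing in one of the two directions, which is impossible for positive
  integers.\<close>

lemma strictly_log_concave_step:
  fixes x y z :: int
  assumes "x * z < y\<^sup>2" "0 < y" "y \<le> x"
  shows "z < y"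
proof -
  have "y * y \<le> x * y"
    using assms by (simp add: mult_right_mono)
  then have "x * z < x * y"
    using assms(1) by (simp add: power2_eq_square)
  moreover have "0 < x"
    using assms by linarith
  ultimately show ?thesis
    by simp
qed

lemma strictly_log_concave_decay:
  fixes h :: "int \<Rightarrow> int"
  assumes pos: "\<And>t. 0 < h t" and concave: "\<And>t. h t * h (t + 2) < (h (t + 1))\<^sup>2"
    and start: "h 1 \<le> h 0"
  shows "h (int m + 1) \<le> h (int m) \<and> h (int m + 1) \<le> h 0 - int m"
proof (induction m)
  case 0
  then show ?case using start by simp
next
  case (Suc m)
  have "h (int m + 2) < h (int m + 1)"
    using strictly_log_concave_step[OF concave pos] Suc by (simp add: add.assoc)
  moreover have "int (Suc m) = int m + 1" "int m + 1 + 1 = int m + 2"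
    by simp_all
  ultimately show ?case
    using Suc by (simp only:) linarith
qed

lemma no_positive_strictly_log_concave_int_seq:
  fixes h :: "int \<Rightarrow> int"
  assumes pos: "\<And>t. 0 < h t" and concave: "\<And>t. h t * h (t + 2) < (h (t + 1))\<^sup>2"
  shows False
proof -
  have descent: False if "\<And>t. 0 < g t" "\<And>t. g t * g (t + 2) < (g (t + 1))\<^sup>2" "g 1 \<le> g 0"
    for g :: "int \<Rightarrow> int"
  proof -
    have "int (nat (g 0)) = g 0"
      using that(1)[of 0] by simp
    then have "g (g 0 + 1) \<le> 0"
      using strictly_log_concave_decay[OF that, of "nat (g 0)"] by simp
    with that(1)[of "g 0 + 1"] show False by simp
  qed
  show False
  proof (cases "h 1 \<le> h 0")
    case True
    then show False using descent[OF pos concave] by blast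
  next
    case False
    define g where "g t = h (1 - t)" for t
    have "g t * g (t + 2) < (g (t + 1))\<^sup>2" for t
      using concave[of "- 1 - t"] by (simp add: g_def mult.commute)
    moreover have "g 1 \<le> g 0"
      using False by (simp add: g_def)
    ultimately show False
      using descent[of g] pos by (simp add: g_def)
  qed
qed

lemma sl2_cube_neighbours_eq:
  fixes a b\<^sub>1 b\<^sub>2 b\<^sub>3 c\<^sub>1\<^sub>2 c\<^sub>1\<^sub>3 c\<^sub>2\<^sub>3 d :: int
  assumes pos: "0 < a" "0 < b\<^sub>1" "0 < b\<^sub>2"
    and e12: "b\<^sub>1 * b\<^sub>2 - a * c\<^sub>1\<^sub>2 = 1" and e13: "b\<^sub>1 * b\<^sub>3 - a * c\<^sub>1\<^sub>3 = 1"
    and e23: "b\<^sub>2 * b\<^sub>3 - a * c\<^sub>2\<^sub>3 = 1"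
    and f1: "c\<^sub>1\<^sub>2 * c\<^sub>1\<^sub>3 - b\<^sub>1 * d = 1" and f2: "c\<^sub>1\<^sub>2 * c\<^sub>2\<^sub>3 - b\<^sub>2 * d = 1"
  shows "b\<^sub>1 = b\<^sub>2"
proof -
  have d1: "b\<^sub>1 * d = c\<^sub>1\<^sub>2 * c\<^sub>1\<^sub>3 - 1" and d2: "b\<^sub>2 * d = c\<^sub>1\<^sub>2 * c\<^sub>2\<^sub>3 - 1"
    using f1 f2 by simp_all
  have "a\<^sup>2 * (b\<^sub>1 * d) = (a * c\<^sub>1\<^sub>2) * (a * c\<^sub>1\<^sub>3) - a\<^sup>2"
    "a\<^sup>2 * (b\<^sub>2 * d) = (a * c\<^sub>1\<^sub>2) * (a * c\<^sub>2\<^sub>3) - a\<^sup>2"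
    unfolding d1 d2 by (simp_all add: algebra_simps power2_eq_square)
  moreover have "a * c\<^sub>1\<^sub>2 = b\<^sub>1 * b\<^sub>2 - 1" "a * c\<^sub>1\<^sub>3 = b\<^sub>1 * b\<^sub>3 - 1"
    "a * c\<^sub>2\<^sub>3 = b\<^sub>2 * b\<^sub>3 - 1"
    using e12 e13 e23 by simp_all
  ultimately have "b\<^sub>2 * ((b\<^sub>1 * b\<^sub>2 - 1) * (b\<^sub>1 * b\<^sub>3 - 1) - a\<^sup>2)
      = b\<^sub>1 * ((b\<^sub>1 * b\<^sub>2 - 1) * (b\<^sub>2 * b\<^sub>3 - 1) - a\<^sup>2)"
    by (metis mult.left_commute)
  then have "(b\<^sub>1 - b\<^sub>2) * (b\<^sub>1 * b\<^sub>2 - 1 + a\<^sup>2) = 0"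
    by (simp add: algebra_simps power2_eq_square)
  moreover have "0 < b\<^sub>1 * b\<^sub>2 - 1 + a\<^sup>2"
    using pos by (smt (verit) mult_pos_pos zero_less_power)
  ultimately show ?thesis by simp
qed

lemma vadd_swap: "vadd (vadd i x) y = vadd (vadd i y) x"
  by (auto simp: vadd_def)

lemma vadd_unitvec_in_lattice: "i \<in> lattice n \<Longrightarrow> k < n \<Longrightarrow> vadd i (unitvec k) \<in> lattice n"
  by (auto simp: lattice_def vadd_def unitvec_def)

lemma SL2_tiling_pos: "SL2_tiling n a \<Longrightarrow> i \<in> lattice n \<Longrightarrow> 0 < a i"
  by (simp add: SL2_tiling_def)

lemma SL2_tiling_rel:
  assumes "SL2_tiling n a" "i \<in> lattice n" "k < n" "l < n" "k \<noteq> l"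
  shows "a (vadd i (unitvec k)) * a (vadd i (unitvec l))
    - a i * a (vadd (vadd i (unitvec k)) (unitvec l)) = 1"
proof -
  have "a (vadd i (unitvec l)) * a (vadd i (unitvec k))
      - a i * a (vadd (vadd i (unitvec k)) (unitvec l)) = 1"
    using assms unfolding SL2_tiling_def by blast
  then show ?thesis
    by (simp add: mult.commute)
qed

lemma SL2_tiling_neighbours_eq:
  assumes T: "SL2_tiling n a" and i: "i \<in> lattice n"
    and "k < n" "l < n" "m < n" "k \<noteq> l" "k \<noteq> m" "l \<noteq> m"
  shows "a (vadd i (unitvec k)) = a (vadd i (unitvec l))"
proof -
  let ?e = unitvec
  have ik: "vadd i (?e k) \<in> lattice n" and il: "vadd i (?e l) \<in> lattice n"
    using assms vadd_unitvec_in_lattice by auto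
  have f2: "a (vadd (vadd i (?e k)) (?e l)) * a (vadd (vadd i (?e l)) (?e m))
      - a (vadd i (?e l)) * a (vadd (vadd (vadd i (?e k)) (?e l)) (?e m)) = 1"
    using SL2_tiling_rel[OF T il, of k m] assms by (simp add: vadd_swap)
  show ?thesis
    by (rule sl2_cube_neighbours_eq[OF SL2_tiling_pos[OF T i] SL2_tiling_pos[OF T ik]
          SL2_tiling_pos[OF T il] SL2_tiling_rel[OF T i, of k l] SL2_tiling_rel[OF T i, of k m]
          SL2_tiling_rel[OF T i, of l m] SL2_tiling_rel[OF T ik, of l m] f2])
       (use assms in auto)
qed

theorem proposition2p4:
  fixes n :: nat
  assumes "n \<ge> 3"
  shows "\<not> (\<exists>a. SL2_tiling n a)"
proof
  assume "\<exists>a. SL2_tiling n a"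
  then obtain a where T: "SL2_tiling n a" ..
  define v :: "int \<Rightarrow> nat \<Rightarrow> int" where "v t = (\<lambda>m. if m = 0 then t else 0)" for t
  define h where "h t = a (v t)" for t
  have v: "v t \<in> lattice n" for t
    using assms by (auto simp: lattice_def v_def)
  have v_step: "vadd (v t) (unitvec 0) = v (t + 1)" for t
    by (auto simp: vadd_def unitvec_def v_def)
  have side: "a (vadd (v t) (unitvec 1)) = h (t + 1)" for t
    using SL2_tiling_neighbours_eq[OF T v, of 0 1 2 t] assms v_step by (simp add: h_def)
  have "h (t + 1) * h (t + 1) - h t * h (t + 2) = 1" for t
    using SL2_tiling_rel[OF T v, of 0 1 t] assms side[of t] side[of "t + 1"] v_step
    by (simp add: h_def add.assoc)
  then have "h t * h (t + 2) < (h (t + 1))\<^sup>2" for t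
    by (smt (verit) power2_eq_square)
  moreover have "0 < h t" for t
    using SL2_tiling_pos[OF T v] by (simp add: h_def)
  ultimately show False
    using no_positive_strictly_log_concave_int_seq by blast
qed

end
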